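(* Let $\Omega\subset\mathbb{R}^2$ be open and bounded with piecewise-smooth boundary $\Gamma$, let $\beta_x,\beta_y\in\mathbb{R}$, and let $\Gamma_-=\{(x,y)\in\Gamma:\beta_xn_x+\beta_yn_y<0\}$, $\Gamma_+=\Gamma\setminus\Gamma_-$. Let $D_x=H^{-1}Q_x$ and $D_y=H^{-1}Q_y$ be SBP operators (with a common norm matrix $H$) for $\partial/\partial x$ and $\partial/\partial y$ on a node set $S$, with boundary matrices $E_x,E_y$, and suppose $\beta_xE_x+\beta_yE_y=E_++E_-$ where $E_+$ is symmetric positive semi-definite, $E_-$ is symmetric negative semi-definite, and $\mathbf{p}_k^TE_\pm\mathbf{p}_m=\oint_{\Gamma_\pm}\mathcal{P}_k\mathcal{P}_m(\beta_xn_x+\beta_yn_y)\,d\Gamma$ for all $k,m\in\{1,\dots,\eta_\tau\}$. Let $\mathbf{u}(t)$ solve $$\frac{d\mathbf{u}}{dt}+\beta_xD_x\mathbf{u}+\beta_yD_y\mathbf{u}=\sigma H^{-1}E_-(\mathbf{u}-\mathbf{u}_{bc})$$ with homogeneous boundary data $\mathbf{u}_{bc}=\mathbf{0}$ and bounded initial condition. If $\sigma\ge\tfrac12$, then $\|\mathbf{u}\|_H=\sqrt{\mathbf{u}^TH\mathbf{u}}$ is non-increasing in $t$.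
   Context: Monomial basis: $\mathcal{P}_k(x,y)=x^{i}y^{j-i}$ with $k=j(j+1)/2+i+1$, $0\le i\le j$; $\mathcal{P}_1,\dots,\mathcal{P}_{\eta_q}$ are the monomials of total degree at most $q$, $\eta_q=(q+1)(q+2)/2$. $\mathbf{p}_k$ is the vector of values of $\mathcal{P}_k$ at the nodes. $(n_x,n_y)$ is the outward unit normal on $\Gamma$. Definition (SBP operator): an $n\times n$ matrix $D_x$ is a degree $p$ SBP approximation of $\partial/\partial x$ on nodes $S$ if (1) $D_x\mathbf{p}_k=\mathbf{p}_k'$ for all $k\le\eta_p$, where $\mathbf{p}_k'$ holds the values of $\partial\mathcal{P}_k/\partial x$ at the nodes; (2) $D_x=H^{-1}Q_x$ with $H$ symmetric positive definite; (3) $Q_x=Q_x^A+\tfrac12E_x$ with $(Q_x^A)^T=-Q_x^A$, $E_x^T=E_x$, and $\mathbf{p}_k^TE_x\mathbf{p}_m=\oint_\Gamma\mathcal{P}_k\mathcal{P}_mn_x\,d\Gamma$ for all $k,m\le\eta_\tau$, for some integer $\tau\ge p$. The $y$-version uses $\partial/\partial y$ and $n_y$ with matrices $D_y,Q_y,Q_y^A,E_y$. *)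

theory Defs
  imports "HOL-Complex_Analysis.Winding_Numbers"
begin

text \<open>Points of the plane are represented as complex numbers z = x + i y.
  The monomial basis P_k with k = j(j+1)/2+i+1, 0 <= i <= j, is indexed
  directly by the pair (i,j): P_k(x,y) = x^i y^(j-i). The indices k <= eta_q
  correspond exactly to the pairs with i <= j <= q.\<close>

definition mono :: "nat \<Rightarrow> nat \<Rightarrow> complex \<Rightarrow> real" where
  "mono i j z = Re z ^ i * Im z ^ (j - i)"

definition dmono_x :: "nat \<Rightarrow> nat \<Rightarrow> complex \<Rightarrow> real" where
  "dmono_x i j z = real i * Re z ^ (i - 1) * Im z ^ (j - i)"

definition dmono_y :: "nat \<Rightarrow> nat \<Rightarrow> complex \<Rightarrow> real" where
  "dmono_y i j z = Re z ^ i * (real (j - i) * Im z ^ (j - i - 1))"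

definition nodevec :: "('n::finite \<Rightarrow> complex) \<Rightarrow> (complex \<Rightarrow> real) \<Rightarrow> real ^ 'n" where
  "nodevec S f = (\<chi> k. f (S k))"

text \<open>Omega is open and bounded with piecewise-smooth boundary Gamma, given as a finite
  family of closed piecewise C1 paths (parametrised on [0,1]) whose images make up the
  frontier and which together form a positively oriented (counterclockwise) cycle
  around Omega: total winding number 1 at points of Omega, 0 outside its closure.\<close>
definition pw_smooth_boundary :: "complex set \<Rightarrow> (real \<Rightarrow> complex) list \<Rightarrow> bool" where
  "pw_smooth_boundary \<Omega> gs \<longleftrightarrow>
     open \<Omega> \<and> bounded \<Omega> \<and>
     (\<forall>g\<in>set gs. valid_path g \<and> pathfinish g = pathstart g) \<and>
     frontier \<Omega> = (\<Union>g\<in>set gs. path_image g) \<and>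
     (\<forall>z. z \<notin> frontier \<Omega> \<longrightarrow>
        (\<Sum>g\<leftarrow>gs. winding_number g z) = (if z \<in> \<Omega> then 1 else 0))"

text \<open>Boundary integral  oint_Gamma f w dGamma  where the weight w is expressed in terms of
  the tangent vector d = g'(t): for a positively oriented boundary the outward normal
  times arc length is (n_x, n_y) dGamma = (Im d, - Re d) dt.\<close>
definition bdry_int :: "(real \<Rightarrow> complex) list \<Rightarrow> (complex \<Rightarrow> real) \<Rightarrow> (complex \<Rightarrow> real) \<Rightarrow> real" where
  "bdry_int gs w f =
     (\<Sum>g\<leftarrow>gs. integral {0..1} (\<lambda>t. f (g t) * w (vector_derivative g (at t))))"

definition wx :: "complex \<Rightarrow> real" where "wx d = Im d"
definition wy :: "complex \<Rightarrow> real" where "wy d = - Re d"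

definition wminus :: "real \<Rightarrow> real \<Rightarrow> complex \<Rightarrow> real" where
  "wminus bx by d = (let v = bx * wx d + by * wy d in if v < 0 then v else 0)"
definition wplus :: "real \<Rightarrow> real \<Rightarrow> complex \<Rightarrow> real" where
  "wplus bx by d = (let v = bx * wx d + by * wy d in if v < 0 then 0 else v)"

definition sym_pos_def :: "real ^ 'n ^ 'n \<Rightarrow> bool" where
  "sym_pos_def H \<longleftrightarrow> transpose H = H \<and> (\<forall>x. x \<noteq> 0 \<longrightarrow> x \<bullet> (H *v x) > 0)"

definition sym_psd :: "real ^ 'n ^ 'n \<Rightarrow> bool" where
  "sym_psd E \<longleftrightarrow> transpose E = E \<and> (\<forall>x. x \<bullet> (E *v x) \<ge> 0)"

definition sym_nsd :: "real ^ 'n ^ 'n \<Rightarrow> bool" where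
  "sym_nsd E \<longleftrightarrow> transpose E = E \<and> (\<forall>x. x \<bullet> (E *v x) \<le> 0)"

definition sbp_x ::
  "nat \<Rightarrow> nat \<Rightarrow> ('n::finite \<Rightarrow> complex) \<Rightarrow> (real \<Rightarrow> complex) list \<Rightarrow>
   real^'n^'n \<Rightarrow> real^'n^'n \<Rightarrow> real^'n^'n \<Rightarrow> real^'n^'n \<Rightarrow> real^'n^'n \<Rightarrow> bool" where
  "sbp_x p \<tau> S gs D H Q QA E \<longleftrightarrow>
     (\<forall>j\<le>p. \<forall>i\<le>j. D *v nodevec S (mono i j) = nodevec S (dmono_x i j)) \<and>
     D = matrix_inv H ** Q \<and> sym_pos_def H \<and>
     Q = QA + (1/2) *\<^sub>R E \<and> transpose QA = - QA \<and> transpose E = E \<and>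
     p \<le> \<tau> \<and>
     (\<forall>j1\<le>\<tau>. \<forall>i1\<le>j1. \<forall>j2\<le>\<tau>. \<forall>i2\<le>j2.
        nodevec S (mono i1 j1) \<bullet> (E *v nodevec S (mono i2 j2)) =
        bdry_int gs wx (\<lambda>z. mono i1 j1 z * mono i2 j2 z))"

definition sbp_y ::
  "nat \<Rightarrow> nat \<Rightarrow> ('n::finite \<Rightarrow> complex) \<Rightarrow> (real \<Rightarrow> complex) list \<Rightarrow>
   real^'n^'n \<Rightarrow> real^'n^'n \<Rightarrow> real^'n^'n \<Rightarrow> real^'n^'n \<Rightarrow> real^'n^'n \<Rightarrow> bool" where
  "sbp_y p \<tau> S gs D H Q QA E \<longleftrightarrow>
     (\<forall>j\<le>p. \<forall>i\<le>j. D *v nodevec S (mono i j) = nodevec S (dmono_y i j)) \<and>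
     D = matrix_inv H ** Q \<and> sym_pos_def H \<and>
     Q = QA + (1/2) *\<^sub>R E \<and> transpose QA = - QA \<and> transpose E = E \<and>
     p \<le> \<tau> \<and>
     (\<forall>j1\<le>\<tau>. \<forall>i1\<le>j1. \<forall>j2\<le>\<tau>. \<forall>i2\<le>j2.
        nodevec S (mono i1 j1) \<bullet> (E *v nodevec S (mono i2 j2)) =
        bdry_int gs wy (\<lambda>z. mono i1 j1 z * mono i2 j2 z))"

definition H_norm :: "real^'n^'n \<Rightarrow> real^'n \<Rightarrow> real" where
  "H_norm H u = sqrt (u \<bullet> (H *v u))"

end

theory Submission
  imports Defs
begin

text \<open>The energy method. For symmetric positive definite \<open>H\<close> and \<open>D = H\<^sup>-\<^sup>1 (Q\<^sup>A + E/2)\<close>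
  with skew-symmetric \<open>Q\<^sup>A\<close>, summation by parts gives \<open>u\<^sup>T H D u = u\<^sup>T E u / 2\<close>. Hence
  along a solution
  \<open>d/dt \<parallel>u\<parallel>\<^sub>H\<^sup>2 = - u\<^sup>T (\<beta>\<^sub>x E\<^sub>x + \<beta>\<^sub>y E\<^sub>y) u + 2\<sigma> u\<^sup>T E\<^sub>- u = - u\<^sup>T E\<^sub>+ u + (2\<sigma> - 1) u\<^sup>T E\<^sub>- u\<close>,
  which is non-positive when \<open>E\<^sub>+ \<ge> 0\<close>, \<open>E\<^sub>- \<le> 0\<close> and \<open>\<sigma> \<ge> 1/2\<close>.\<close>

lemma matrix_mul_matrix_inv:
  fixes A :: "'a::semiring_1^'n^'n"
  assumes "invertible A"
  shows "A ** matrix_inv A = mat 1"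
  using assms unfolding invertible_def matrix_inv_def by (rule someI2_ex) auto

lemma sym_pos_def_invertible:
  assumes "sym_pos_def H"
  shows "invertible H"
proof -
  have "\<forall>x. H *v x = 0 \<longrightarrow> x = 0"
    using assms unfolding sym_pos_def_def by (metis inner_zero_right less_irrefl)
  then show ?thesis
    by (simp add: invertible_left_inverse matrix_left_invertible_ker)
qed

lemma inner_matrix_vector_symmetric:
  fixes H :: "real^'n^'n"
  assumes "transpose H = H"
  shows "x \<bullet> (H *v y) = y \<bullet> (H *v x)"
  by (metis assms dot_lmul_matrix inner_commute transpose_matrix_vector)

lemma matrix_vector_mult_minus_left:
  fixes A :: "'a::ring_1^'n^'m"
  shows "(- A) *v x = - (A *v x)"
  by (simp add: vec_eq_iff matrix_vector_mult_def sum_negf)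

lemma matrix_vector_mult_minus_right:
  fixes A :: "'a::ring_1^'n^'m"
  shows "A *v (- x) = - (A *v x)"
  by (simp add: vec_eq_iff matrix_vector_mult_def sum_negf)

lemma inner_matrix_vector_skew:
  fixes A :: "real^'n^'n"
  assumes "transpose A = - A"
  shows "x \<bullet> (A *v x) = 0"
proof -
  have "x \<bullet> (A *v x) = (transpose A *v x) \<bullet> x"
    by (simp add: dot_lmul_matrix)
  also have "\<dots> = - (x \<bullet> (A *v x))"
    using assms by (simp add: matrix_vector_mult_minus_left inner_commute)
  finally show ?thesis by simp
qed

lemma sbp_energy_identity:
  fixes H Q QA E :: "real^'n^'n"
  assumes "sym_pos_def H" "Q = QA + (1/2) *\<^sub>R E" "transpose QA = - QA"
  shows "x \<bullet> (H *v ((matrix_inv H ** Q) *v x)) = (1/2) * (x \<bullet> (E *v x))"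
proof -
  have "H *v ((matrix_inv H ** Q) *v x) = Q *v x"
    using matrix_mul_matrix_inv[OF sym_pos_def_invertible[OF assms(1)]]
    by (metis matrix_mul_assoc matrix_vector_mul_assoc matrix_vector_mul_lid)
  then show ?thesis
    using inner_matrix_vector_skew[OF assms(3), of x] assms(2)
    by (simp add: matrix_vector_mult_add_rdistrib inner_add_right
        scaleR_matrix_vector_assoc[symmetric])
qed

lemma upwind_sat_energy_rate_eq:
  fixes H Dx Dy Qx Qy QxA QyA Ex Ey Ep Em :: "real^'n^'n"
  assumes H: "sym_pos_def H"
    and Dx: "Dx = matrix_inv H ** Qx" "Qx = QxA + (1/2) *\<^sub>R Ex" "transpose QxA = - QxA"
    and Dy: "Dy = matrix_inv H ** Qy" "Qy = QyA + (1/2) *\<^sub>R Ey" "transpose QyA = - QyA"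
    and split: "\<beta>x *\<^sub>R Ex + \<beta>y *\<^sub>R Ey = Ep + Em"
  shows "x \<bullet> (H *v (- (\<beta>x *\<^sub>R (Dx *v x)) - \<beta>y *\<^sub>R (Dy *v x)
            + \<sigma> *\<^sub>R (matrix_inv H *v (Em *v x))))
       = - (1/2) * (x \<bullet> (Ep *v x)) + (\<sigma> - 1/2) * (x \<bullet> (Em *v x))"
proof -
  have ex: "x \<bullet> (H *v (Dx *v x)) = (1/2) * (x \<bullet> (Ex *v x))"
    using sbp_energy_identity[OF H Dx(2,3)] Dx(1) by simp
  have ey: "x \<bullet> (H *v (Dy *v x)) = (1/2) * (x \<bullet> (Ey *v x))"
    using sbp_energy_identity[OF H Dy(2,3)] Dy(1) by simp
  have em: "x \<bullet> (H *v (matrix_inv H *v (Em *v x))) = x \<bullet> (Em *v x)"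
    using matrix_mul_matrix_inv[OF sym_pos_def_invertible[OF H]]
    by (metis matrix_vector_mul_assoc matrix_vector_mul_lid)
  have "\<beta>x * (x \<bullet> (Ex *v x)) + \<beta>y * (x \<bullet> (Ey *v x)) = x \<bullet> (Ep *v x) + x \<bullet> (Em *v x)"
    using arg_cong[OF split, of "\<lambda>A. x \<bullet> (A *v x)"]
    by (simp add: matrix_vector_mult_add_rdistrib inner_add_right
        scaleR_matrix_vector_assoc[symmetric])
  moreover have "x \<bullet> (H *v (- (\<beta>x *\<^sub>R (Dx *v x)) - \<beta>y *\<^sub>R (Dy *v x)
            + \<sigma> *\<^sub>R (matrix_inv H *v (Em *v x))))
      = - \<beta>x * (x \<bullet> (H *v (Dx *v x))) - \<beta>y * (x \<bullet> (H *v (Dy *v x)))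
        + \<sigma> * (x \<bullet> (H *v (matrix_inv H *v (Em *v x))))"
    by (simp add: matrix_vector_right_distrib matrix_vector_mult_diff_distrib
        matrix_vector_mult_scaleR matrix_vector_mult_minus_right inner_diff_right inner_add_right)
  ultimately show ?thesis
    unfolding ex ey em by (simp add: algebra_simps)
qed

lemma upwind_sat_energy_rate_nonpos:
  fixes H Dx Dy Qx Qy QxA QyA Ex Ey Ep Em :: "real^'n^'n"
  assumes "sym_pos_def H"
    and "Dx = matrix_inv H ** Qx" "Qx = QxA + (1/2) *\<^sub>R Ex" "transpose QxA = - QxA"
    and "Dy = matrix_inv H ** Qy" "Qy = QyA + (1/2) *\<^sub>R Ey" "transpose QyA = - QyA"
    and "\<beta>x *\<^sub>R Ex + \<beta>y *\<^sub>R Ey = Ep + Em"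
    and Ep: "sym_psd Ep" and Em: "sym_nsd Em" and sigma: "\<sigma> \<ge> 1/2"
  shows "x \<bullet> (H *v (- (\<beta>x *\<^sub>R (Dx *v x)) - \<beta>y *\<^sub>R (Dy *v x)
            + \<sigma> *\<^sub>R (matrix_inv H *v (Em *v x)))) \<le> 0"
proof -
  have "x \<bullet> (Ep *v x) \<ge> 0" using Ep unfolding sym_psd_def by blast
  moreover have "(\<sigma> - 1/2) * (x \<bullet> (Em *v x)) \<le> 0"
    using Em sigma unfolding sym_nsd_def by (simp add: mult_nonneg_nonpos)
  ultimately show ?thesis
    using upwind_sat_energy_rate_eq[OF assms(1-8), of x \<sigma>] by linarith
qed

lemma quadratic_form_nonincreasing:
  fixes H :: "real^'n^'n" and u v :: "real \<Rightarrow> real^'n"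
  assumes H: "transpose H = H"
    and deriv: "\<And>t. t \<ge> 0 \<Longrightarrow> (u has_vector_derivative v t) (at t within {0..})"
    and dissipative: "\<And>t. t \<ge> 0 \<Longrightarrow> u t \<bullet> (H *v v t) \<le> 0"
    and "0 \<le> s" "s \<le> t"
  shows "u t \<bullet> (H *v u t) \<le> u s \<bullet> (H *v u s)"
proof -
  define f where "f r = u r \<bullet> (H *v u r)" for r
  have "(f has_derivative (\<lambda>h. h * (2 * (u r \<bullet> (H *v v r))))) (at r within {s..t})"
    if "s \<le> r" "r \<le> t" for r
  proof -
    have du: "(u has_derivative (\<lambda>h. h *\<^sub>R v r)) (at r within {s..t})"
      using deriv[of r] that \<open>0 \<le> s\<close> unfolding has_vector_derivative_def
      by (auto intro: has_derivative_subset)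
    have "(f has_derivative (\<lambda>h. u r \<bullet> (H *v (h *\<^sub>R v r)) + (h *\<^sub>R v r) \<bullet> (H *v u r)))
        (at r within {s..t})"
      unfolding f_def
      by (intro has_derivative_inner du bounded_linear.has_derivative[OF _ du]
          matrix_vector_mul_bounded_linear)
    then show ?thesis
      using inner_matrix_vector_symmetric[OF H, of "v r" "u r"]
      by (simp add: matrix_vector_mult_scaleR algebra_simps)
  qed
  from mvt_very_simple[OF \<open>s \<le> t\<close> this]
  obtain r where r: "r \<in> {s..t}" and "f t - f s = (t - s) * (2 * (u r \<bullet> (H *v v r)))"
    by blast
  moreover have "(t - s) * (2 * (u r \<bullet> (H *v v r))) \<le> 0"
    using dissipative[of r] r \<open>0 \<le> s\<close> \<open>s \<le> t\<close> by (intro mult_nonneg_nonpos) auto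
  ultimately show ?thesis unfolding f_def by linarith
qed

theorem theorem3p5:
  fixes \<Omega> :: "complex set" and gs :: "(real \<Rightarrow> complex) list"
    and \<beta>x \<beta>y \<sigma> :: real and px py \<tau> :: nat
    and S :: "'n::finite \<Rightarrow> complex"
    and H Dx Dy Qx Qy QxA QyA Ex Ey Ep Em :: "real^'n^'n"
    and u :: "real \<Rightarrow> real^'n"
  assumes dom: "pw_smooth_boundary \<Omega> gs"
    and sbpx: "sbp_x px \<tau> S gs Dx H Qx QxA Ex"
    and sbpy: "sbp_y py \<tau> S gs Dy H Qy QyA Ey"
    and split: "\<beta>x *\<^sub>R Ex + \<beta>y *\<^sub>R Ey = Ep + Em"
    and Ep: "sym_psd Ep" and Em: "sym_nsd Em"
    and Ep_int: "\<forall>j1\<le>\<tau>. \<forall>i1\<le>j1. \<forall>j2\<le>\<tau>. \<forall>i2\<le>j2.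
        nodevec S (mono i1 j1) \<bullet> (Ep *v nodevec S (mono i2 j2)) =
        bdry_int gs (wplus \<beta>x \<beta>y) (\<lambda>z. mono i1 j1 z * mono i2 j2 z)"
    and Em_int: "\<forall>j1\<le>\<tau>. \<forall>i1\<le>j1. \<forall>j2\<le>\<tau>. \<forall>i2\<le>j2.
        nodevec S (mono i1 j1) \<bullet> (Em *v nodevec S (mono i2 j2)) =
        bdry_int gs (wminus \<beta>x \<beta>y) (\<lambda>z. mono i1 j1 z * mono i2 j2 z)"
    and ode: "\<forall>t\<ge>0. (u has_vector_derivative
        (- (\<beta>x *\<^sub>R (Dx *v u t)) - \<beta>y *\<^sub>R (Dy *v u t)
         + \<sigma> *\<^sub>R (matrix_inv H *v (Em *v (u t - 0))))) (at t within {0..})"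
    and sigma: "\<sigma> \<ge> 1/2"
  shows "\<forall>s t. 0 \<le> s \<longrightarrow> s \<le> t \<longrightarrow> H_norm H (u t) \<le> H_norm H (u s)"
  \<comment> \<open>Only the signs of \<open>E\<^sub>\<plusminus>\<close> matter.\<close>
proof (intro allI impI)
  fix s t :: real
  assume "0 \<le> s" "s \<le> t"
  from sbpx have H: "sym_pos_def H"
    and Dx: "Dx = matrix_inv H ** Qx" "Qx = QxA + (1/2) *\<^sub>R Ex" "transpose QxA = - QxA"
    unfolding sbp_x_def by blast+
  from sbpy have Dy: "Dy = matrix_inv H ** Qy" "Qy = QyA + (1/2) *\<^sub>R Ey" "transpose QyA = - QyA"
    unfolding sbp_y_def by blast+
  have "u t \<bullet> (H *v u t) \<le> u s \<bullet> (H *v u s)"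
  proof (rule quadratic_form_nonincreasing[where v = "\<lambda>r. - (\<beta>x *\<^sub>R (Dx *v u r))
      - \<beta>y *\<^sub>R (Dy *v u r) + \<sigma> *\<^sub>R (matrix_inv H *v (Em *v u r))"])
    show "transpose H = H" using H unfolding sym_pos_def_def by blast
  next
    fix r :: real
    show "u r \<bullet> (H *v (- (\<beta>x *\<^sub>R (Dx *v u r)) - \<beta>y *\<^sub>R (Dy *v u r)
                 + \<sigma> *\<^sub>R (matrix_inv H *v (Em *v u r)))) \<le> 0"
      by (rule upwind_sat_energy_rate_nonpos[OF H Dx Dy split Ep Em sigma])
  qed (use ode \<open>0 \<le> s\<close> \<open>s \<le> t\<close> in auto)
  then show "H_norm H (u t) \<le> H_norm H (u s)"
    unfolding H_norm_def by simp
qed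

end
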